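(* Let $\mathbb X$ be a Euclidean space, $g\colon\mathbb X\to\mathbb R^m$ twice continuously differentiable, $D\subset\mathbb R^m$ convex and polyhedral, $\Phi(x):=g(x)-D$, $(\bar x,0)\in\operatorname{gph}\Phi$, and $u\in\mathbb S_{\mathbb X}$ with $\nabla g(\bar x)u\in\mathcal T_D(g(\bar x))$. For $y^*,z^*\in\mathbb R^m$ let $\mathrm{C}(u,y^*,z^* )$ denote the conditions $\nabla g(\bar x)^*y^*=0$, $\nabla^2\langle y^*,g\rangle(\bar x)(u)+\nabla g(\bar x)^*z^*=0$, $y^*,z^*\in\mathcal N_D(g(\bar x))$. Then: (i) The 2-regularity condition $\operatorname{Im}\nabla g(\bar x)+\nabla^2g(\bar x)[u,\nabla g(\bar x)^{-1}\mathcal T_D(g(\bar x))]-\mathcal T_D(g(\bar x))=\mathbb R^m$ holds if and only if: for all $y^*,z^*$, $\mathrm{C}(u,y^*,z^* )$ implies $y^*=0$. (ii) The condition "for all $y^*,z^*$: $\nabla g(\bar x)^*y^*=0$, $\nabla^2\langle y^*,g\rangle(\bar x)(u)+\nabla g(\bar x)^*z^*=0$, $y^*\in\mathcal N_{\mathcal T_D(g(\bar x))}(\nabla g(\bar x)u)$ and $z^*\in\mathcal N_{\mathcal T_D(g(\bar x))}(\nabla g(\bar x)u)$ (respectively, in the second variant, $z^*\in\mathcal T_{\mathcal N_{\mathcal T_D(g(\bar x))}(\nabla g(\bar x)u)}(y^* )$) imply $y^*=0$" is (in either variant) equivalent to: for all $y^*,z^*$, $\mathrm{C}(u,y^*,z^*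 )$ together with $\langle z^*,\nabla g(\bar x)u\rangle=0$ implies $y^*=0$. (iii) Gfrerer's condition "for all $y^*,z^*$: $\mathrm C(u,y^*,z^* )$ and $y^*\in\operatorname{argmax}\{\tfrac12\nabla^2\langle\hat y^*,g\rangle(\bar x)[u,u]\mid \hat y^*\in\mathcal N_D(g(\bar x))\cap\ker\nabla g(\bar x)^*\}$ imply $y^*=0$", and the condition "for each $s\in\mathbb X$ and all $y^*,z^*$: $\nabla g(\bar x)^*y^*=0$, $\nabla^2\langle y^*,g\rangle(\bar x)(u)+\nabla g(\bar x)^*z^*=0$, $y^*\in\mathcal N_{\mathbf T(u)}(w_s(u,0))$ and $z^*\in\mathcal N_{\mathbf T(u)}(w_s(u,0))$ (respectively, in the second variant, $z^*\in\mathcal T_{\mathcal N_{\mathbf T(u)}(w_s(u,0))}(y^* )$) imply $y^*=0$" are both (the latter in either variant) equivalent to: for all $y^*,z^*\in\mathbb R^m$ and $s\in\mathbb X$, $\mathrm C(u,y^*,z^* )$ together with $w_s(u,0)\in\mathbf T(u)$ implies $y^*=0$.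
   Context: $\mathbb S_{\mathbb X}$ is the unit sphere; $\mathcal T_Q$ and $\mathcal N_Q$ are the tangent and (limiting, here convex-analysis) normal cones. $\nabla g(\bar x)$ is the derivative, $\nabla g(\bar x)^*$ its adjoint, $\nabla g(\bar x)^{-1}A:=\{s\mid\nabla g(\bar x)s\in A\}$; $\nabla^2\langle y^*,g\rangle(\bar x)(u)\in\mathbb X$ is the Hessian of $x\mapsto\langle y^*,g(x)\rangle$ at $\bar x$ applied to $u$, $\nabla^2\langle y^*,g\rangle(\bar x)[u,u]$ the associated quadratic form, $\nabla^2 g(\bar x)[u,s]:=(\langle u,\nabla^2g_i(\bar x)s\rangle)_{i=1}^m$ and $\nabla^2g(\bar x)[u,A]:=\{\nabla^2g(\bar x)[u,s]\mid s\in A\}$. $\mathbf T(u):=\mathcal T_{\mathcal T_D(g(\bar x))}(\nabla g(\bar x)u)$ and $w_s(u,0):=\nabla g(\bar x)s+\tfrac12\nabla^2g(\bar x)[u,u]$. *)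

theory Defs
  imports "HOL-Analysis.Analysis"
begin

definition tangent_cone :: "'a::real_normed_vector set \<Rightarrow> 'a \<Rightarrow> 'a set" where
  "tangent_cone A x = {w. \<exists>t v. (\<forall>k. 0 < t k) \<and> t \<longlonglongrightarrow> 0 \<and> v \<longlonglongrightarrow> w
                              \<and> (\<forall>k. x + t k *\<^sub>R v k \<in> A)}"

definition normal_cone :: "'a::real_inner set \<Rightarrow> 'a \<Rightarrow> 'a set" where
  "normal_cone A x = (if x \<in> A then {v. \<forall>a\<in>A. v \<bullet> (a - x) \<le> 0} else {})"

definition C2_with :: "('a::euclidean_space \<Rightarrow> 'b::euclidean_space) \<Rightarrow> ('a \<Rightarrow> 'a \<Rightarrow>\<^sub>L 'b)
     \<Rightarrow> ('a \<Rightarrow> 'a \<Rightarrow>\<^sub>L ('a \<Rightarrow>\<^sub>L 'b)) \<Rightarrow> bool" where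
  "C2_with g g' g'' \<longleftrightarrow> (\<forall>x. (g has_derivative blinfun_apply (g' x)) (at x))
     \<and> (\<forall>x. (g' has_derivative blinfun_apply (g'' x)) (at x))
     \<and> continuous_on UNIV g''"

definition d2 :: "('a::euclidean_space \<Rightarrow> 'a \<Rightarrow>\<^sub>L ('a \<Rightarrow>\<^sub>L 'b::euclidean_space)) \<Rightarrow> 'a \<Rightarrow> 'a \<Rightarrow> 'a \<Rightarrow> 'b" where
  "d2 g'' xb u s = blinfun_apply (blinfun_apply (g'' xb) u) s"

text \<open>nabla^2\<langle>y,g\<rangle>(xb)(u): Hessian of x \<mapsto> \<langle>y, g x\<rangle> at xb applied to u, i.e. the vector h
  with h \<bullet> s = y \<bullet> nabla^2g(xb)[u,s] for all s.\<close>
definition hess_lag :: "('a::euclidean_space \<Rightarrow> 'a \<Rightarrow>\<^sub>L ('a \<Rightarrow>\<^sub>L 'b::euclidean_space)) \<Rightarrow> 'a \<Rightarrow> 'b \<Rightarrow> 'a \<Rightarrow> 'a" where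
  "hess_lag g'' xb y u = adjoint (d2 g'' xb u) y"

end

theory Submission
  imports Defs
begin

(* Every condition only involves A = nabla g(xb), B = nabla^2 g(xb)[u,.] and the polyhedral cone
   T = T_D(g xb).
   Polyhedral convex cones are finitely generated (Minkowski-Weyl), hence their linear images and
   sums are closed and points outside them can be separated (Farkas); their tangent and normal cones
   are polyhedral again. Separating a point from Im A + B(A^-1 T) - T gives (i). In (ii), z orthogonal
   to A u means z in N_T(A u), and z in T_N(y) may replace z in N because A^* maps T_N(y) into A^* N
   when A^* y = 0. In (iii), Gfrerer's condition is vacuous when some feasible multiplier increases
   <y, B u>, and otherwise every multiplier is a maximiser; the condition with w_s reduces to the
   multiplier condition by minimising <B^* y, s> over {s | w_s in T_u} and using the Lagrange
   multiplier of the minimiser as the new z. *)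

definition polar :: "'a::real_inner set \<Rightarrow> 'a set" where
  "polar C = {v. \<forall>x\<in>C. v \<bullet> x \<le> 0}"

definition polyhedral_cone :: "('i \<Rightarrow> 'a::real_inner) \<Rightarrow> 'i set \<Rightarrow> 'a set" where
  "polyhedral_cone a I = {x. \<forall>i\<in>I. a i \<bullet> x \<le> 0}"

lemma convex_cone_Int: "convex_cone A \<Longrightarrow> convex_cone B \<Longrightarrow> convex_cone (A \<inter> B)"
  unfolding convex_cone_iff by auto

lemma convex_cone_polar: "convex_cone (polar C)"
  unfolding convex_cone_iff polar_def
  by (auto simp: inner_add_left mult_nonneg_nonpos add_nonpos_nonpos)

lemma polar_antimono: "C \<subseteq> C' \<Longrightarrow> polar C' \<subseteq> polar C"
  unfolding polar_def by auto

lemma convex_cone_polyhedral_cone: "convex_cone (polyhedral_cone a I)"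
  unfolding convex_cone_iff polyhedral_cone_def
  by (auto simp: inner_add_right mult_nonneg_nonpos add_nonpos_nonpos)

lemma convex_polyhedral_cone: "convex (polyhedral_cone a I)"
  using convex_cone_polyhedral_cone[of a I] by (simp add: convex_cone_def)

lemma polyhedron_polyhedral_cone:
  fixes a :: "'i \<Rightarrow> 'a::euclidean_space"
  assumes "finite I"
  shows "polyhedron (polyhedral_cone a I)"
proof -
  have "polyhedral_cone a I = \<Inter> ((\<lambda>i. {x. a i \<bullet> x \<le> 0}) ` I)"
    unfolding polyhedral_cone_def by auto
  then show ?thesis
    using assms by (auto intro!: polyhedron_Inter polyhedron_halfspace_le)
qed

lemma preimage_polyhedral_cone:
  fixes f :: "'a::euclidean_space \<Rightarrow> 'b::euclidean_space"
  assumes "linear f"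
  shows "{x. f x \<in> polyhedral_cone a I} = polyhedral_cone (\<lambda>i. adjoint f (a i)) I"
  by (auto simp: polyhedral_cone_def adjoint_clauses(2)[OF assms])

text \<open>Minkowski--Weyl for cones: scaling into the unit cube turns the cone into a polytope.\<close>
lemma polyhedron_convex_cone_obtains_generators:
  fixes C :: "'a::euclidean_space set"
  assumes "polyhedron C" "convex_cone C"
  obtains S where "finite S" "C = convex_cone hull S"
proof -
  let ?P = "C \<inter> cbox (- One) One"
  have "polytope ?P"
    using assms by (simp add: polytope_eq_bounded_polyhedron bounded_Int)
  then obtain S where S: "finite S" "?P = convex hull S"
    unfolding polytope_def by blast
  have "S \<subseteq> C"
    using S(2) hull_subset[of S convex] by blast
  then have "convex_cone hull S \<subseteq> C"
    using assms(2) by (rule hull_minimal)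
  moreover have "x \<in> convex_cone hull S" if x: "x \<in> C" for x
  proof (cases "x = 0")
    case True
    then show ?thesis by (simp add: convex_cone_hull_contains_0)
  next
    case False
    define x' where "x' = (1 / norm x) *\<^sub>R x"
    have "norm x' = 1"
      using False by (simp add: x'_def)
    then have "x' \<in> cbox (- One) One"
      unfolding mem_box using Basis_le_norm[of _ x'] by (force simp: abs_le_iff)
    moreover have "x' \<in> C"
      using x assms(2) unfolding x'_def by (simp add: convex_cone_scaleR)
    ultimately have "x' \<in> convex_cone hull S"
      using S(2) convex_hull_subset_convex_cone_hull by blast
    then have "norm x *\<^sub>R x' \<in> convex_cone hull S"
      by (simp add: convex_cone_hull_mul)
    then show ?thesis
      using False by (simp add: x'_def)
  qed
  ultimately show ?thesis
    using that S(1) by blast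
qed

lemma polyhedron_linear_image_convex_cone:
  fixes f :: "'a::euclidean_space \<Rightarrow> 'b::euclidean_space"
  assumes "polyhedron C" "convex_cone C" "linear f"
  shows "polyhedron (f ` C)"
proof -
  obtain S where "finite S" "C = convex_cone hull S"
    using polyhedron_convex_cone_obtains_generators assms(1,2) .
  then show ?thesis
    using assms(3) by (metis convex_cone_hull_linear_image finite_imageI polyhedron_convex_cone_hull)
qed

lemma polyhedron_convex_cone_sums:
  fixes C C' :: "'a::euclidean_space set"
  assumes "polyhedron C" "convex_cone C" "polyhedron C'" "convex_cone C'"
  shows "polyhedron (\<Union>x\<in>C. \<Union>y\<in>C'. {x + y})"
proof -
  obtain S S' where "finite S" "C = convex_cone hull S" "finite S'" "C' = convex_cone hull S'"
    using polyhedron_convex_cone_obtains_generators assms by metis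
  then show ?thesis
    by (simp add: polyhedron_convex_cone_hull flip: convex_cone_hull_Un)
qed

lemma separating_hyperplane_closed_convex_cone:
  fixes C :: "'a::euclidean_space set"
  assumes "convex_cone C" "closed C" "z \<notin> C"
  obtains c where "c \<in> polar C" "0 < c \<bullet> z"
proof -
  obtain a b where ab: "a \<bullet> z < b" "\<forall>x\<in>C. b < a \<bullet> x"
    using separating_hyperplane_closed_point assms(2,3) assms(1)[unfolded convex_cone_def] by blast
  have b: "b < 0"
    using ab(2) convex_cone_contains_0[OF assms(1)] by auto
  have "0 \<le> a \<bullet> x" if "x \<in> C" for x
  proof (rule ccontr)
    assume neg: "\<not> 0 \<le> a \<bullet> x"
    have "(b / (a \<bullet> x)) *\<^sub>R x \<in> C"
      using neg b that assms(1) by (simp add: convex_cone_scaleR divide_nonpos_neg)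
    then show False
      using ab(2) neg by fastforce
  qed
  then show ?thesis
    using ab b by (intro that[of "- a"]) (auto simp: polar_def)
qed

lemma polar_polyhedral_cone:
  fixes a :: "'i \<Rightarrow> 'a::euclidean_space"
  assumes "finite I"
  shows "polar (polyhedral_cone a I) = convex_cone hull (a ` I)"
proof
  show "convex_cone hull (a ` I) \<subseteq> polar (polyhedral_cone a I)"
  proof (rule hull_minimal)
    show "a ` I \<subseteq> polar (polyhedral_cone a I)"
      by (auto simp: polar_def polyhedral_cone_def inner_commute)
  qed (rule convex_cone_polar)
  show "polar (polyhedral_cone a I) \<subseteq> convex_cone hull (a ` I)"
  proof
    fix v assume v: "v \<in> polar (polyhedral_cone a I)"
    show "v \<in> convex_cone hull (a ` I)"
    proof (rule ccontr)
      assume "v \<notin> convex_cone hull (a ` I)"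
      then obtain c where c: "c \<in> polar (convex_cone hull (a ` I))" "0 < c \<bullet> v"
        by (rule separating_hyperplane_closed_convex_cone[OF convex_cone_convex_cone_hull
              closed_convex_cone_hull[OF finite_imageI[OF assms]]])
      then have "c \<in> polyhedral_cone a I"
        by (auto simp: polar_def polyhedral_cone_def inner_commute hull_inc)
      then show False
        using v c(2) by (auto simp: polar_def inner_commute)
    qed
  qed
qed

lemma polar_preimage_polyhedral_cone:
  fixes f :: "'a::euclidean_space \<Rightarrow> 'b::euclidean_space"
  assumes "linear f" "finite I"
  shows "polar {x. f x \<in> polyhedral_cone a I} = adjoint f ` polar (polyhedral_cone a I)"
  using assms
  by (simp add: preimage_polyhedral_cone polar_polyhedral_cone image_image
      flip: convex_cone_hull_linear_image[OF adjoint_linear])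

lemma adjoint_eq_0_if_polar_range:
  fixes f :: "'a::euclidean_space \<Rightarrow> 'b::euclidean_space"
  assumes "linear f" "c \<in> polar (range f)"
  shows "adjoint f c = 0"
proof -
  have "adjoint f c \<bullet> adjoint f c = c \<bullet> f (adjoint f c)"
    by (simp add: adjoint_clauses(2)[OF assms(1)])
  also have "\<dots> \<le> 0"
    using assms(2) by (simp add: polar_def)
  finally show ?thesis
    by (metis antisym inner_eq_zero_iff inner_ge_zero)
qed

lemma normal_cone_inner_tangent_cone_le:
  assumes v: "v \<in> normal_cone C x" and w: "w \<in> tangent_cone C x"
  shows "v \<bullet> w \<le> 0"
proof -
  obtain t vs where t: "\<forall>k. 0 < t k" "vs \<longlonglongrightarrow> w" "\<forall>k. x + t k *\<^sub>R vs k \<in> C"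
    using w unfolding tangent_cone_def by blast
  have "\<forall>c\<in>C. v \<bullet> (c - x) \<le> 0"
    using v by (auto simp: normal_cone_def split: if_splits)
  then have "v \<bullet> (x + t k *\<^sub>R vs k - x) \<le> 0" for k
    using t(3) by blast
  then have "t k * (v \<bullet> vs k) \<le> 0" for k
    by simp
  then have "v \<bullet> vs k \<le> 0" for k
    using t(1) by (meson mult_le_0_iff not_less)
  moreover have "(\<lambda>k. v \<bullet> vs k) \<longlonglongrightarrow> v \<bullet> w"
    by (intro tendsto_intros t(2))
  ultimately show ?thesis
    by (meson LIMSEQ_le_const2)
qed

lemma tangent_coneI_eventually:
  assumes "\<forall>\<^sub>F t in at_right 0. x + t *\<^sub>R w \<in> C"
  shows "w \<in> tangent_cone C x"
proof -
  obtain e :: real where e: "0 < e" "\<And>t. 0 < t \<Longrightarrow> t < e \<Longrightarrow> x + t *\<^sub>R w \<in> C"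
    using assms by (auto simp: eventually_at_right_field)
  define t where "t k = e / real (k + 2)" for k
  have "t \<longlonglongrightarrow> 0"
    unfolding t_def using LIMSEQ_ignore_initial_segment[OF lim_const_over_n, of e 2] by simp
  moreover have "0 < t k" "t k < e" for k
  proof -
    show "0 < t k"
      using e(1) by (simp add: t_def)
    have "t k \<le> e / 2"
      unfolding t_def using e(1) by (intro divide_left_mono) auto
    then show "t k < e"
      using e(1) by simp
  qed
  ultimately show ?thesis
    unfolding tangent_cone_def using e(2) by (intro CollectI exI[of _ t] exI[of _ "\<lambda>_. w"]) auto
qed

lemma mem_tangent_cone_convex_cone:
  assumes "convex_cone N" "y \<in> N" "z \<in> N"
  shows "z \<in> tangent_cone N y"
  using assms by (intro tangent_coneI_eventually eventually_mono[OF eventually_at_right_less])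
    (simp add: convex_cone_add convex_cone_scaleR)

lemma normal_cone_eq_polar_tangent_cone:
  assumes "convex C" "x \<in> C"
  shows "normal_cone C x = polar (tangent_cone C x)"
proof
  show "normal_cone C x \<subseteq> polar (tangent_cone C x)"
    using normal_cone_inner_tangent_cone_le unfolding polar_def by blast
  show "polar (tangent_cone C x) \<subseteq> normal_cone C x"
  proof
    fix v assume v: "v \<in> polar (tangent_cone C x)"
    have "d - x \<in> tangent_cone C x" if "d \<in> C" for d
    proof (rule tangent_coneI_eventually)
      have "x + t *\<^sub>R (d - x) \<in> C" if "0 < t" "t < 1" for t :: real
        using convexD_alt[OF assms(1,2) \<open>d \<in> C\<close>, of t] that by (simp add: algebra_simps)
      then show "\<forall>\<^sub>F t in at_right 0. x + t *\<^sub>R (d - x) \<in> C"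
        by (auto simp: eventually_at_right_field intro!: exI[of _ 1])
    qed
    then show "v \<in> normal_cone C x"
      using v assms(2) by (auto simp: normal_cone_def polar_def)
  qed
qed

lemma normal_cone_convex_cone:
  assumes "convex_cone T" "w \<in> T"
  shows "normal_cone T w = {v \<in> polar T. v \<bullet> w = 0}"
proof (intro set_eqI iffI)
  fix v assume v: "v \<in> normal_cone T w"
  then have v': "\<forall>t\<in>T. v \<bullet> t \<le> v \<bullet> w"
    using assms(2) by (auto simp: normal_cone_def inner_diff_right)
  have "v \<bullet> w = 0"
    using v'[rule_format, OF convex_cone_contains_0[OF assms(1)]]
      v'[rule_format, OF convex_cone_scaleR[OF assms(1), of 2 w]] assms(2) by simp
  moreover have "v \<bullet> t \<le> 0" if "t \<in> T" for t
    using v'[rule_format, OF convex_cone_add[OF assms(1) assms(2) that]] by (simp add: inner_add_right)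
  ultimately show "v \<in> {v \<in> polar T. v \<bullet> w = 0}"
    by (simp add: polar_def)
next
  fix v assume "v \<in> {v \<in> polar T. v \<bullet> w = 0}"
  then show "v \<in> normal_cone T w"
    using assms(2) by (auto simp: normal_cone_def polar_def inner_diff_right)
qed

lemma convex_cone_normal_cone:
  assumes "x \<in> C"
  shows "convex_cone (normal_cone C x)"
proof -
  have "normal_cone C x = (\<Inter>c\<in>C. {v. (c - x) \<bullet> v \<le> 0})"
    using assms by (auto simp: normal_cone_def inner_commute)
  then show ?thesis
    by (auto intro!: convex_cone_Inter convex_cone_halfspace_le)
qed

lemma convex_normal_cone: "convex (normal_cone C x)"
  using convex_cone_normal_cone[of x C] by (cases "x \<in> C") (auto simp: convex_cone_def normal_cone_def)

lemma conic_normal_cone: "conic (normal_cone C x)"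
  using convex_cone_normal_cone[of x C] by (cases "x \<in> C") (auto simp: convex_cone_def normal_cone_def)

lemma polyhedron_normal_cone_polyhedral_cone:
  fixes a :: "'i \<Rightarrow> 'a::euclidean_space"
  assumes "finite I"
  shows "polyhedron (normal_cone (polyhedral_cone a I) w)"
proof (cases "w \<in> polyhedral_cone a I")
  case True
  then have "normal_cone (polyhedral_cone a I) w = convex_cone hull (a ` I) \<inter> {v. w \<bullet> v = 0}"
    by (auto simp: normal_cone_convex_cone convex_cone_polyhedral_cone polar_polyhedral_cone[OF assms]
        inner_commute)
  then show ?thesis
    using assms by (simp add: polyhedron_convex_cone_hull polyhedron_hyperplane polyhedron_Int)
next
  case False
  then show ?thesis
    by (simp add: normal_cone_def)
qed

lemma eventually_feasible_direction:
  fixes a :: "'i \<Rightarrow> 'a::real_inner"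
  assumes "finite I" "\<forall>i\<in>I. a i \<bullet> x \<le> b i" "\<forall>i\<in>I. a i \<bullet> x = b i \<longrightarrow> a i \<bullet> w \<le> 0"
  shows "\<forall>\<^sub>F t in at_right 0. \<forall>i\<in>I. a i \<bullet> (x + t *\<^sub>R w) \<le> b i"
proof -
  have "\<forall>\<^sub>F t in at_right 0. a i \<bullet> (x + t *\<^sub>R w) \<le> b i" if "i \<in> I" for i
  proof (cases "a i \<bullet> x = b i")
    case True
    have "a i \<bullet> (x + t *\<^sub>R w) \<le> b i" if "0 < t" for t :: real
    proof -
      have "t * (a i \<bullet> w) \<le> 0"
        using assms(3) \<open>i \<in> I\<close> True that by (simp add: mult_nonneg_nonpos)
      then show ?thesis
        using True by (simp add: inner_add_right)
    qed
    with eventually_at_right_less[of "0::real"] show ?thesis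
      by (rule eventually_mono)
  next
    case False
    then have "a i \<bullet> x < b i"
      using assms(2) \<open>i \<in> I\<close> by force
    moreover have "((\<lambda>t. a i \<bullet> (x + t *\<^sub>R w)) \<longlongrightarrow> a i \<bullet> x) (at_right 0)"
      by (auto intro!: tendsto_eq_intros)
    ultimately show ?thesis
      by (auto dest: order_tendstoD(2) elim!: eventually_mono)
  qed
  then show ?thesis
    using assms(1) by (simp add: eventually_ball_finite)
qed

lemma tangent_cone_inequalities:
  fixes a :: "'i \<Rightarrow> 'a::real_inner"
  assumes "finite I" "\<forall>i\<in>I. a i \<bullet> x \<le> b i"
  shows "tangent_cone {x. \<forall>i\<in>I. a i \<bullet> x \<le> b i} x = {w. \<forall>i\<in>I. a i \<bullet> x = b i \<longrightarrow> a i \<bullet> w \<le> 0}"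
    (is "tangent_cone ?P x = ?R")
proof
  show "tangent_cone ?P x \<subseteq> ?R"
  proof (clarify)
    fix w i assume "w \<in> tangent_cone ?P x" "i \<in> I" "a i \<bullet> x = b i"
    moreover have "a i \<in> normal_cone ?P x"
      using assms \<open>i \<in> I\<close> \<open>a i \<bullet> x = b i\<close> by (auto simp: normal_cone_def inner_diff_right)
    ultimately show "a i \<bullet> w \<le> 0"
      using normal_cone_inner_tangent_cone_le by blast
  qed
  show "?R \<subseteq> tangent_cone ?P x"
  proof
    fix w assume "w \<in> ?R"
    then have "\<forall>\<^sub>F t in at_right 0. x + t *\<^sub>R w \<in> ?P"
      using eventually_feasible_direction[OF assms] by simp
    then show "w \<in> tangent_cone ?P x"
      by (rule tangent_coneI_eventually)
  qed
qed

lemma tangent_cone_polyhedral_cone: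
  fixes a :: "'i \<Rightarrow> 'a::real_inner"
  assumes "finite I" "x \<in> polyhedral_cone a I"
  shows "tangent_cone (polyhedral_cone a I) x = polyhedral_cone a {i \<in> I. a i \<bullet> x = 0}"
  using tangent_cone_inequalities[of I a x "\<lambda>_. 0"] assms by (simp add: polyhedral_cone_def) blast

lemma eventually_in_polyhedral_cone:
  fixes a :: "'i \<Rightarrow> 'a::real_inner"
  assumes "finite I" "x \<in> polyhedral_cone a I" "w \<in> tangent_cone (polyhedral_cone a I) x"
  shows "\<forall>\<^sub>F t in at_right 0. x + t *\<^sub>R w \<in> polyhedral_cone a I"
proof -
  have "w \<in> polyhedral_cone a {i \<in> I. a i \<bullet> x = 0}"
    using assms tangent_cone_polyhedral_cone by blast
  then show ?thesis
    unfolding polyhedral_cone_def mem_Collect_eq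
    by (intro eventually_feasible_direction[of I a x "\<lambda>_. 0" w]) (use assms in \<open>auto simp: polyhedral_cone_def\<close>)
qed

lemma polyhedron_obtains_inequalities:
  fixes D :: "'a::euclidean_space set"
  assumes "polyhedron D"
  obtains F :: "'a set set" and a b where "finite F" "D = {x. \<forall>i\<in>F. a i \<bullet> x \<le> b i}"
proof -
  obtain F where F: "finite F" "D = \<Inter> F" "\<forall>h\<in>F. \<exists>a b. a \<noteq> 0 \<and> h = {x. a \<bullet> x \<le> b}"
    using assms unfolding polyhedron_def by blast
  then obtain a b where "\<forall>h\<in>F. h = {x. a h \<bullet> x \<le> b h}"
    by metis
  then have "D = {x. \<forall>i\<in>F. a i \<bullet> x \<le> b i}"
    using F(2) by auto
  then show ?thesis
    using that F(1) by blast
qed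

lemma linear_image_tangent_cone_polyhedron:
  fixes L :: "'a::euclidean_space \<Rightarrow> 'b::euclidean_space"
  assumes L: "linear L" and N: "polyhedron N" "convex_cone N"
    and "y \<in> N" "L y = 0" "z \<in> tangent_cone N y"
  shows "L z \<in> L ` N"
proof (rule ccontr)
  assume "L z \<notin> L ` N"
  moreover have "convex_cone (L ` N)" "closed (L ` N)"
    using L N by (simp_all add: convex_cone_linear_image polyhedron_imp_closed
        polyhedron_linear_image_convex_cone)
  ultimately obtain c where c: "c \<in> polar (L ` N)" "0 < c \<bullet> L z"
    using separating_hyperplane_closed_convex_cone by blast
  have "adjoint L c \<bullet> (n - y) = c \<bullet> L n" for n
    using assms(5) by (simp add: adjoint_clauses(2)[OF L] linear_diff[OF L])
  then have "adjoint L c \<in> normal_cone N y"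
    using c(1) \<open>y \<in> N\<close> by (auto simp: normal_cone_def polar_def)
  then have "adjoint L c \<bullet> z \<le> 0"
    using \<open>z \<in> tangent_cone N y\<close> by (rule normal_cone_inner_tangent_cone_le)
  then show False
    using c(2) by (simp add: adjoint_clauses(2)[OF L])
qed

lemma multiplier_condition_tangent_cone_iff:
  fixes L :: "'a::euclidean_space \<Rightarrow> 'b::euclidean_space"
  assumes L: "linear L" and N: "polyhedron N" "convex N" "conic N"
  shows "(\<forall>y z. L y = 0 \<and> H y + L z = 0 \<and> y \<in> N \<and> z \<in> tangent_cone N y \<longrightarrow> y = 0) \<longleftrightarrow>
         (\<forall>y z. L y = 0 \<and> H y + L z = 0 \<and> y \<in> N \<and> z \<in> N \<longrightarrow> y = 0)"
proof (intro iffI allI impI)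
  fix y z
  assume tangent: "\<forall>y z. L y = 0 \<and> H y + L z = 0 \<and> y \<in> N \<and> z \<in> tangent_cone N y \<longrightarrow> y = 0"
    and yz: "L y = 0 \<and> H y + L z = 0 \<and> y \<in> N \<and> z \<in> N"
  then have "z \<in> tangent_cone N y"
    using N by (intro mem_tangent_cone_convex_cone) (auto simp: convex_cone_def)
  then show "y = 0"
    using tangent yz by blast
next
  fix y z
  assume cone: "\<forall>y z. L y = 0 \<and> H y + L z = 0 \<and> y \<in> N \<and> z \<in> N \<longrightarrow> y = 0"
    and yz: "L y = 0 \<and> H y + L z = 0 \<and> y \<in> N \<and> z \<in> tangent_cone N y"
  then have "convex_cone N"
    using N by (auto simp: convex_cone_def)
  then obtain n where "n \<in> N" "L n = L z"
    using linear_image_tangent_cone_polyhedron[OF L N(1)] yz by (metis imageE)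
  then show "y = 0"
    using cone[rule_format, of y n] yz by simp
qed

lemma closed_inner_image_affine_preimage:
  fixes f :: "'a::euclidean_space \<Rightarrow> 'b::euclidean_space"
  assumes f: "linear f" and "finite I"
  shows "closed ((\<lambda>x. h \<bullet> x) ` {x. f x + b \<in> polyhedral_cone a I})"
proof -
  define g where "g p = f (fst p) + snd p *\<^sub>R b" for p :: "'a \<times> real"
  define L where "L p = (h \<bullet> fst p, snd p)" for p :: "'a \<times> real"
  \<comment> \<open>homogenisation: H = {(x, t). 0 \<le> t \<and> f x + t b \<in> polyhedral_cone a I} is a polyhedral
     cone whose section t = 1 is the affine preimage\<close>
  define H where "H = {p. (0, -1) \<bullet> p \<le> (0::real)} \<inter> {p. g p \<in> polyhedral_cone a I}"
  have g: "linear g"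
    unfolding g_def using f by (intro linearI) (auto simp: linear_add linear_scale algebra_simps)
  have "linear L"
    unfolding L_def by (intro linearI) (auto simp: inner_add_right)
  moreover have "polyhedron H" "convex_cone H"
    unfolding H_def preimage_polyhedral_cone[OF g] using \<open>finite I\<close>
    by (simp_all add: polyhedron_Int polyhedron_halfspace_le polyhedron_polyhedral_cone
        convex_cone_Int convex_cone_halfspace_le convex_cone_polyhedral_cone)
  ultimately have "closed (L ` H)"
    by (simp add: polyhedron_imp_closed polyhedron_linear_image_convex_cone)
  moreover have "(\<lambda>x. h \<bullet> x) ` {x. f x + b \<in> polyhedral_cone a I} = (\<lambda>v. (v, 1)) -` (L ` H)"
  proof (intro set_eqI iffI)
    fix v assume "v \<in> (\<lambda>x. h \<bullet> x) ` {x. f x + b \<in> polyhedral_cone a I}"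
    then obtain x where "f x + b \<in> polyhedral_cone a I" "v = h \<bullet> x"
      by blast
    then have "(x, 1) \<in> H" "L (x, 1) = (v, 1)"
      by (simp_all add: H_def g_def L_def)
    then show "v \<in> (\<lambda>v. (v, 1)) -` (L ` H)"
      by (metis image_eqI vimage_eq)
  next
    fix v assume "v \<in> (\<lambda>v. (v, 1)) -` (L ` H)"
    then obtain x t where "(x, t) \<in> H" "L (x, t) = (v, 1)"
      by auto
    then show "v \<in> (\<lambda>x. h \<bullet> x) ` {x. f x + b \<in> polyhedral_cone a I}"
      by (auto simp: H_def g_def L_def)
  qed
  ultimately show ?thesis
    by (simp add: closed_vimage continuous_on_Pair)
qed

lemma inner_attains_min_affine_preimage:
  fixes f :: "'a::euclidean_space \<Rightarrow> 'b::euclidean_space"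
  assumes "linear f" "finite I" "f x0 + b \<in> polyhedral_cone a I"
    and bounded: "\<And>x. f x + b \<in> polyhedral_cone a I \<Longrightarrow> m \<le> h \<bullet> x"
  obtains x where "f x + b \<in> polyhedral_cone a I"
    "\<And>x'. f x' + b \<in> polyhedral_cone a I \<Longrightarrow> h \<bullet> x \<le> h \<bullet> x'"
proof -
  let ?S = "(\<lambda>x. h \<bullet> x) ` {x. f x + b \<in> polyhedral_cone a I}"
  have bdd: "bdd_below ?S"
    using bounded by (intro bdd_belowI[of _ m]) auto
  have "Inf ?S \<in> ?S"
    using closed_inner_image_affine_preimage[OF assms(1,2)] assms(3) bdd
    by (intro closed_contains_Inf) auto
  then obtain x where x: "f x + b \<in> polyhedral_cone a I" "Inf ?S = h \<bullet> x"
    by auto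
  have "h \<bullet> x \<le> h \<bullet> x'" if "f x' + b \<in> polyhedral_cone a I" for x'
    unfolding x(2)[symmetric] using that bdd by (auto intro: cInf_lower)
  then show ?thesis
    using that x(1) by blast
qed

lemma minimizer_obtains_multiplier:
  fixes f :: "'a::euclidean_space \<Rightarrow> 'b::euclidean_space"
  assumes f: "linear f" and "finite I" and x: "f x + b \<in> polyhedral_cone a I"
    and min: "\<And>x'. f x' + b \<in> polyhedral_cone a I \<Longrightarrow> h \<bullet> x \<le> h \<bullet> x'"
  obtains l where "l \<in> normal_cone (polyhedral_cone a I) (f x + b)" "adjoint f l = - h"
proof -
  let ?P = "polyhedral_cone a I" and ?w = "f x + b"
  have "- h \<in> polar {d. f d \<in> tangent_cone ?P ?w}"
    unfolding polar_def
  proof (clarify)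
    fix d assume "f d \<in> tangent_cone ?P ?w"
    then have "\<forall>\<^sub>F t in at_right 0. ?w + t *\<^sub>R f d \<in> ?P"
      by (rule eventually_in_polyhedral_cone[OF \<open>finite I\<close> x])
    then obtain t :: real where t: "0 < t" "?w + t *\<^sub>R f d \<in> ?P"
      by (auto simp: eventually_at_right_field dest!: spec[of _ "_ / 2"] intro: half_gt_zero)
    then have "f (x + t *\<^sub>R d) + b \<in> ?P"
      using f by (simp add: linear_add linear_scale algebra_simps)
    then have "h \<bullet> x \<le> h \<bullet> (x + t *\<^sub>R d)"
      by (rule min)
    then have "0 \<le> t * (h \<bullet> d)"
      by (simp add: inner_add_right)
    then show "- h \<bullet> d \<le> 0"
      using t(1) by (simp add: zero_le_mult_iff)
  qed
  also have "polar {d. f d \<in> tangent_cone ?P ?w} = adjoint f ` normal_cone ?P ?w"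
  proof -
    show ?thesis
      using polar_preimage_polyhedral_cone[OF f, of "{i \<in> I. a i \<bullet> ?w = 0}" a] \<open>finite I\<close>
      by (simp add: normal_cone_eq_polar_tangent_cone[OF convex_polyhedral_cone x]
          tangent_cone_polyhedral_cone[OF _ x])
  qed
  finally obtain l where "l \<in> normal_cone ?P ?w" "- h = adjoint f l"
    by blast
  then show ?thesis
    using that by simp
qed

lemma polyhedral_cone_obtains_affine_solution:
  fixes f :: "'a::euclidean_space \<Rightarrow> 'b::euclidean_space"
  assumes f: "linear f" and C: "polyhedron C" "convex_cone C"
    and dual: "\<And>c. c \<in> polar C \<Longrightarrow> adjoint f c = 0 \<Longrightarrow> c \<bullet> b \<le> 0"
  obtains x where "f x + b \<in> C"
proof -
  let ?M = "\<Union>t\<in>C. \<Union>y\<in>range f. {t + y}"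
  have range: "polyhedron (range f)" "convex_cone (range f)"
    using f by (simp_all add: polyhedron_linear_image_convex_cone convex_cone_linear_image
        subspace_imp_convex_cone)
  have "b \<in> ?M"
  proof (rule ccontr)
    assume "b \<notin> ?M"
    moreover have "convex_cone ?M"
      by (rule convex_cone_sums[OF C(2) range(2)])
    moreover have "closed ?M"
      by (rule polyhedron_imp_closed[OF polyhedron_convex_cone_sums[OF C range]])
    ultimately obtain c where c: "c \<in> polar ?M" "0 < c \<bullet> b"
      using separating_hyperplane_closed_convex_cone by blast
    have "t + f 0 \<in> ?M" "0 + f p \<in> ?M" if "t \<in> C" for t p
      using that convex_cone_contains_0[OF C(2)] by blast+
    then have "c \<in> polar C" "c \<in> polar (range f)"
      using c(1) linear_0[OF f] convex_cone_contains_0[OF C(2)] by (fastforce simp: polar_def)+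
    then show False
      using dual adjoint_eq_0_if_polar_range[OF f] c(2) by fastforce
  qed
  then obtain t p where "t \<in> C" "b = t + f p"
    by blast
  then have "f (- p) + b \<in> C"
    by (simp add: linear_neg[OF f])
  then show ?thesis
    by (rule that)
qed

text \<open>A and B stand for nabla g(xb) and nabla^2 g(xb)[u, .], the cone T for T_D(g xb) described by
  the active constraint normals a i, Tu for the paper's T(u), and multipliers y z for C(u, y, z).\<close>
locale polyhedral_critical_direction =
  fixes A :: "'a::euclidean_space \<Rightarrow> 'b::euclidean_space" and B :: "'a \<Rightarrow> 'b"
    and a :: "'i \<Rightarrow> 'b" and I :: "'i set" and u :: 'a
  assumes linear_A: "linear A" and linear_B: "linear B" and finite_I: "finite I"
    and critical: "A u \<in> polyhedral_cone a I"
begin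

abbreviation T :: "'b set" where "T \<equiv> polyhedral_cone a I"

abbreviation Tu :: "'b set" where "Tu \<equiv> tangent_cone T (A u)"

definition multipliers :: "'b \<Rightarrow> 'b \<Rightarrow> bool" where
  "multipliers y z \<longleftrightarrow> adjoint A y = 0 \<and> adjoint B y + adjoint A z = 0 \<and> y \<in> polar T \<and> z \<in> polar T"

definition regularity_cone :: "'b set" where
  "regularity_cone = {p + q - c | p q c. p \<in> range A \<and> q \<in> B ` {s. A s \<in> T} \<and> c \<in> T}"

lemma inner_A_eq_0: "adjoint A y = 0 \<Longrightarrow> y \<bullet> A s = 0"
  by (metis adjoint_clauses(2)[OF linear_A] inner_zero_left)

lemma inner_B_eq:
  assumes "adjoint B y + adjoint A z = 0"
  shows "y \<bullet> B s = - (z \<bullet> A s)"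
proof -
  have "adjoint B y = - adjoint A z"
    using assms by (simp add: eq_neg_iff_add_eq_0)
  then show ?thesis
    by (simp flip: adjoint_clauses(2)[OF linear_A] adjoint_clauses(2)[OF linear_B])
qed

lemma inner_second_order_point:
  "adjoint A y = 0 \<Longrightarrow> y \<bullet> (A s + (1/2) *\<^sub>R B u) = (1/2) * (y \<bullet> B u)"
  by (simp add: inner_add_right inner_A_eq_0)

lemma normal_cone_critical: "normal_cone T (A u) = {v \<in> polar T. v \<bullet> A u = 0}"
  by (rule normal_cone_convex_cone[OF convex_cone_polyhedral_cone critical])

lemma polar_Tu: "polar Tu = normal_cone T (A u)"
  by (rule normal_cone_eq_polar_tangent_cone[OF convex_polyhedral_cone critical, symmetric])

lemma Tu_eq: "Tu = polyhedral_cone a {i \<in> I. a i \<bullet> A u = 0}"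
  by (rule tangent_cone_polyhedral_cone[OF finite_I critical])

lemma polar_Tu_subset: "polar Tu \<subseteq> polar T"
  by (intro polar_antimono subsetI mem_tangent_cone_convex_cone convex_cone_polyhedral_cone critical)

lemma polar_TuI: "y \<in> polar T \<Longrightarrow> y \<bullet> A u = 0 \<Longrightarrow> y \<in> polar Tu"
  by (simp add: polar_Tu normal_cone_critical)

lemma polyhedron_normal_cone_Tu: "polyhedron (normal_cone Tu w)"
  unfolding Tu_eq using finite_I by (simp add: polyhedron_normal_cone_polyhedral_cone)

lemma multipliers_eq_0_if_regular:
  assumes "regularity_cone = UNIV" "multipliers y z"
  shows "y = 0"
proof -
  obtain p s c where decomp: "- y = A p + B s - c" "A s \<in> T" "c \<in> T"
    using assms(1) unfolding regularity_cone_def by blast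
  have "- (y \<bullet> y) = y \<bullet> (A p + B s - c)"
    unfolding decomp(1)[symmetric] by simp
  also have "\<dots> = - (z \<bullet> A s) - y \<bullet> c"
    using assms(2) by (simp add: multipliers_def inner_add_right inner_diff_right inner_A_eq_0 inner_B_eq)
  also have "\<dots> \<ge> 0"
  proof -
    have "z \<bullet> A s \<le> 0" "y \<bullet> c \<le> 0"
      using assms(2) decomp(2,3) by (auto simp: multipliers_def polar_def)
    then show ?thesis
      by simp
  qed
  finally show "y = 0"
    by (metis antisym inner_eq_zero_iff inner_ge_zero neg_0_le_iff_le)
qed

lemma polyhedron_regularity_cone: "polyhedron regularity_cone"
  and convex_cone_regularity_cone: "convex_cone regularity_cone"
proof -
  let ?K = "{s. A s \<in> T}"
  let ?R = "\<Union>x\<in>range A. \<Union>y\<in>B ` ?K. {x + y}"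
  have K: "polyhedron ?K" "convex_cone ?K"
    using finite_I by (simp_all add: preimage_polyhedral_cone[OF linear_A] polyhedron_polyhedral_cone
        convex_cone_polyhedral_cone)
  have range: "polyhedron (range A)" "convex_cone (range A)"
    using linear_A by (simp_all add: polyhedron_linear_image_convex_cone convex_cone_linear_image
        subspace_imp_convex_cone)
  have BK: "polyhedron (B ` ?K)" "convex_cone (B ` ?K)"
    using K linear_B by (simp_all add: polyhedron_linear_image_convex_cone convex_cone_linear_image)
  have R: "polyhedron ?R" "convex_cone ?R"
    using polyhedron_convex_cone_sums[OF range BK] convex_cone_sums[OF range(2) BK(2)] by simp_all
  have negT: "polyhedron (uminus ` T)" "convex_cone (uminus ` T)"
    using finite_I by (simp_all add: polyhedron_negations convex_cone_negations polyhedron_polyhedral_cone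
        convex_cone_polyhedral_cone)
  have "regularity_cone = (\<Union>x\<in>?R. \<Union>y\<in>uminus ` T. {x + y})"
    unfolding regularity_cone_def by fastforce
  then show "polyhedron regularity_cone" "convex_cone regularity_cone"
    using polyhedron_convex_cone_sums[OF R negT] convex_cone_sums[OF R(2) negT(2)] by simp_all
qed

lemma polar_regularity_cone_obtains_multipliers:
  assumes c: "c \<in> polar regularity_cone"
  obtains z where "multipliers (- c) z"
proof -
  have mem: "A p + B s - t \<in> regularity_cone" if "A s \<in> T" "t \<in> T" for p s t
    unfolding regularity_cone_def using that by blast
  have T0: "0 \<in> T" and A0: "A 0 = 0" and B0: "B 0 = 0"
    by (simp_all add: convex_cone_contains_0 convex_cone_polyhedral_cone linear_0 linear_A linear_B)
  have c_le: "c \<bullet> (A p + B s - t) \<le> 0" if "A s \<in> T" "t \<in> T" for p s t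
    using c mem[OF that, of p] by (simp add: polar_def)
  have "c \<in> polar (range A)"
    using c_le[OF _ T0, of 0] A0 B0 T0 by (auto simp: polar_def)
  then have Ac: "adjoint A (- c) = 0"
    by (simp add: adjoint_eq_0_if_polar_range linear_A linear_neg[OF adjoint_linear[OF linear_A]])
  have "- c \<in> polar T"
    using c_le[of 0 _ 0] A0 B0 T0 by (auto simp: polar_def)
  have "adjoint B c \<in> polar {s. A s \<in> T}"
    using c_le[OF _ T0, of _ 0] A0 by (auto simp: polar_def adjoint_clauses(2)[OF linear_B])
  then obtain z where "z \<in> polar T" "adjoint B c = adjoint A z"
    using polar_preimage_polyhedral_cone[OF linear_A finite_I] by auto
  then have "multipliers (- c) z"
    using Ac \<open>- c \<in> polar T\<close> by (simp add: multipliers_def linear_neg[OF adjoint_linear[OF linear_B]])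
  then show ?thesis
    by (rule that)
qed

lemma regularity_iff: "regularity_cone = UNIV \<longleftrightarrow> (\<forall>y z. multipliers y z \<longrightarrow> y = 0)"
proof (intro iffI allI impI)
  assume trivial: "\<forall>y z. multipliers y z \<longrightarrow> y = 0"
  show "regularity_cone = UNIV"
  proof (rule ccontr)
    assume "regularity_cone \<noteq> UNIV"
    then obtain v where "v \<notin> regularity_cone"
      by blast
    then obtain c where c: "c \<in> polar regularity_cone" "0 < c \<bullet> v"
      by (rule separating_hyperplane_closed_convex_cone[OF convex_cone_regularity_cone
            polyhedron_imp_closed[OF polyhedron_regularity_cone]])
    obtain z where "multipliers (- c) z"
      using polar_regularity_cone_obtains_multipliers[OF c(1)] .
    then show False
      using trivial c(2) by fastforce
  qed
qed (rule multipliers_eq_0_if_regular)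

lemma normal_cone_condition_iff:
  "(\<forall>y z. adjoint A y = 0 \<and> adjoint B y + adjoint A z = 0 \<and> y \<in> normal_cone T (A u)
      \<and> z \<in> normal_cone T (A u) \<longrightarrow> y = 0)
   \<longleftrightarrow> (\<forall>y z. multipliers y z \<and> z \<bullet> A u = 0 \<longrightarrow> y = 0)"
proof (intro iffI allI impI)
  fix y z
  assume normal: "\<forall>y z. adjoint A y = 0 \<and> adjoint B y + adjoint A z = 0 \<and> y \<in> normal_cone T (A u)
      \<and> z \<in> normal_cone T (A u) \<longrightarrow> y = 0"
    and yz: "multipliers y z \<and> z \<bullet> A u = 0"
  then have "y \<bullet> A u = 0"
    using inner_A_eq_0 by (auto simp: multipliers_def)
  then show "y = 0"
    using normal yz by (auto simp: normal_cone_critical multipliers_def)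
qed (auto simp: normal_cone_critical multipliers_def)

lemma tangent_normal_cone_condition_iff:
  "(\<forall>y z. adjoint A y = 0 \<and> adjoint B y + adjoint A z = 0 \<and> y \<in> normal_cone T (A u)
      \<and> z \<in> tangent_cone (normal_cone T (A u)) y \<longrightarrow> y = 0)
   \<longleftrightarrow> (\<forall>y z. multipliers y z \<and> z \<bullet> A u = 0 \<longrightarrow> y = 0)"
  by (rule trans[OF multiplier_condition_tangent_cone_iff normal_cone_condition_iff])
    (simp_all add: adjoint_linear linear_A polyhedron_normal_cone_polyhedral_cone finite_I
      convex_normal_cone conic_normal_cone)

abbreviation arg_max_multiplier :: "'b \<Rightarrow> bool" where
  "arg_max_multiplier y \<equiv>
     is_arg_max (\<lambda>yh. (1/2) * (yh \<bullet> B u)) (\<lambda>yh. yh \<in> polar T \<and> adjoint A yh = 0) y"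

lemma not_arg_max_multiplier_if_ascent:
  assumes yh: "yh \<in> polar T" "adjoint A yh = 0" "0 < yh \<bullet> B u"
  shows "\<not> arg_max_multiplier y"
proof
  assume max: "arg_max_multiplier y"
  then have y: "y \<in> polar T" "adjoint A y = 0"
    by (simp_all add: is_arg_max_def)
  have "y + yh \<in> polar T"
    using convex_cone_add[OF convex_cone_polar] y yh by blast
  moreover have "adjoint A (y + yh) = 0"
    using y yh by (simp add: linear_add[OF adjoint_linear[OF linear_A]])
  moreover have "(1/2) * (y \<bullet> B u) < (1/2) * ((y + yh) \<bullet> B u)"
    using yh by (simp add: inner_add_left)
  ultimately show False
    using max unfolding is_arg_max_def by blast
qed

lemma second_order_point_notin_Tu_if_ascent:
  assumes yh: "yh \<in> polar T" "adjoint A yh = 0" "0 < yh \<bullet> B u"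
  shows "A s + (1/2) *\<^sub>R B u \<notin> Tu"
proof
  assume "A s + (1/2) *\<^sub>R B u \<in> Tu"
  moreover have "yh \<in> polar Tu"
    using yh by (simp add: polar_TuI inner_A_eq_0)
  ultimately have "yh \<bullet> (A s + (1/2) *\<^sub>R B u) \<le> 0"
    by (simp add: polar_def)
  then show False
    using yh by (simp add: inner_second_order_point)
qed

lemma arg_max_multiplier_if_no_ascent:
  assumes no_ascent: "\<forall>yh\<in>polar T. adjoint A yh = 0 \<longrightarrow> yh \<bullet> B u \<le> 0"
    and "multipliers y z"
  shows "arg_max_multiplier y"
proof -
  have "y \<bullet> B u = - (z \<bullet> A u)"
    using assms(2) by (simp add: multipliers_def inner_B_eq)
  moreover have "z \<bullet> A u \<le> 0"
    using assms(2) critical by (simp add: multipliers_def polar_def)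
  ultimately have "y \<bullet> B u = 0"
    using no_ascent assms(2) by (force simp: multipliers_def)
  then show ?thesis
    using no_ascent assms(2) by (auto simp: is_arg_max_def multipliers_def not_less)
qed

lemma second_order_point_in_Tu_if_no_ascent:
  assumes "\<forall>yh\<in>polar T. adjoint A yh = 0 \<longrightarrow> yh \<bullet> B u \<le> 0"
  obtains s where "A s + (1/2) *\<^sub>R B u \<in> Tu"
proof -
  obtain s where "A s + (1/2) *\<^sub>R B u \<in> T"
  proof (rule polyhedral_cone_obtains_affine_solution[OF linear_A])
    show "polyhedron T" "convex_cone T"
      using finite_I by (simp_all add: polyhedron_polyhedral_cone convex_cone_polyhedral_cone)
    show "c \<bullet> (1/2) *\<^sub>R B u \<le> 0" if "c \<in> polar T" "adjoint A c = 0" for c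
      using assms that by simp
  qed
  then show ?thesis
    using that mem_tangent_cone_convex_cone[OF convex_cone_polyhedral_cone critical] by blast
qed

lemma arg_max_condition_iff:
  "(\<forall>y z. multipliers y z \<and> arg_max_multiplier y \<longrightarrow> y = 0)
   \<longleftrightarrow> (\<forall>y z s. multipliers y z \<and> A s + (1/2) *\<^sub>R B u \<in> Tu \<longrightarrow> y = 0)"
proof (cases "\<exists>yh\<in>polar T. adjoint A yh = 0 \<and> 0 < yh \<bullet> B u")
  case True
  then obtain yh where yh: "yh \<in> polar T" "adjoint A yh = 0" "0 < yh \<bullet> B u"
    by blast
  show ?thesis
    using not_arg_max_multiplier_if_ascent[OF yh] second_order_point_notin_Tu_if_ascent[OF yh]
    by blast
next
  case False
  then have no_ascent: "\<forall>yh\<in>polar T. adjoint A yh = 0 \<longrightarrow> yh \<bullet> B u \<le> 0"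
    by (auto simp: not_less)
  obtain s0 where "A s0 + (1/2) *\<^sub>R B u \<in> Tu"
    using second_order_point_in_Tu_if_no_ascent[OF no_ascent] .
  then show ?thesis
    using arg_max_multiplier_if_no_ascent[OF no_ascent] by blast
qed

text \<open>The new multiplier l is the Lagrange multiplier of a minimiser of the linear function
  s \<mapsto> adjoint B y \<bullet> s over the second-order feasible set, on which z bounds it from below.\<close>
lemma multipliers_obtain_normal_multiplier:
  assumes yz: "multipliers y z" and s0: "A s0 + (1/2) *\<^sub>R B u \<in> Tu"
  obtains s l where "adjoint B y + adjoint A l = 0"
    "y \<in> normal_cone Tu (A s + (1/2) *\<^sub>R B u)" "l \<in> normal_cone Tu (A s + (1/2) *\<^sub>R B u)"
proof -
  let ?J = "{i \<in> I. a i \<bullet> A u = 0}" and ?b = "(1/2) *\<^sub>R B u"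
  have y: "adjoint A y = 0" "y \<in> polar Tu"
    using yz by (simp_all add: multipliers_def polar_TuI inner_A_eq_0)
  have "y \<bullet> (A s0 + ?b) \<le> 0"
    using y(2) s0 by (simp add: polar_def)
  moreover have "y \<bullet> B u = - (z \<bullet> A u)" "z \<bullet> A u \<le> 0"
    using yz critical by (simp_all add: multipliers_def inner_B_eq polar_def)
  ultimately have yBu: "y \<bullet> B u = 0" and "z \<bullet> A u = 0"
    using y(1) by (simp_all add: inner_second_order_point)
  then have "z \<in> polar Tu"
    using yz by (simp add: multipliers_def polar_TuI)
  have bound: "(1/2) * (z \<bullet> B u) \<le> adjoint B y \<bullet> s" if "A s + ?b \<in> polyhedral_cone a ?J" for s
  proof -
    have "z \<bullet> (A s + ?b) \<le> 0"
      using \<open>z \<in> polar Tu\<close> that by (simp add: polar_def Tu_eq)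
    moreover have "adjoint B y \<bullet> s = - (z \<bullet> A s)"
      using yz by (simp add: multipliers_def inner_B_eq adjoint_clauses(2)[OF linear_B])
    ultimately show ?thesis
      by (simp add: inner_add_right)
  qed
  have "finite ?J"
    using finite_I by simp
  moreover have "A s0 + ?b \<in> polyhedral_cone a ?J"
    using s0 by (simp add: Tu_eq)
  ultimately obtain s where s: "A s + ?b \<in> polyhedral_cone a ?J"
    "\<And>s'. A s' + ?b \<in> polyhedral_cone a ?J \<Longrightarrow> adjoint B y \<bullet> s \<le> adjoint B y \<bullet> s'"
    using inner_attains_min_affine_preimage[OF linear_A _ _ bound] by blast
  obtain l where l: "l \<in> normal_cone Tu (A s + ?b)" "adjoint A l = - adjoint B y"
    unfolding Tu_eq by (rule minimizer_obtains_multiplier[OF linear_A \<open>finite ?J\<close> s])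
  have "y \<in> normal_cone Tu (A s + ?b)"
    unfolding Tu_eq normal_cone_convex_cone[OF convex_cone_polyhedral_cone s(1)]
    using y yBu by (simp add: Tu_eq inner_second_order_point)
  moreover have "adjoint B y + adjoint A l = 0"
    using l(2) by simp
  ultimately show ?thesis
    using that l(1) by blast
qed

lemma second_order_normal_cone_condition_iff:
  "(\<forall>s y z. adjoint A y = 0 \<and> adjoint B y + adjoint A z = 0 \<and> y \<in> normal_cone Tu (A s + (1/2) *\<^sub>R B u)
      \<and> z \<in> normal_cone Tu (A s + (1/2) *\<^sub>R B u) \<longrightarrow> y = 0)
   \<longleftrightarrow> (\<forall>y z s. multipliers y z \<and> A s + (1/2) *\<^sub>R B u \<in> Tu \<longrightarrow> y = 0)"
proof (intro iffI allI impI)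
  fix y z s
  assume normal: "\<forall>s y z. adjoint A y = 0 \<and> adjoint B y + adjoint A z = 0
      \<and> y \<in> normal_cone Tu (A s + (1/2) *\<^sub>R B u) \<and> z \<in> normal_cone Tu (A s + (1/2) *\<^sub>R B u) \<longrightarrow> y = 0"
    and yz: "multipliers y z \<and> A s + (1/2) *\<^sub>R B u \<in> Tu"
  then obtain s' l where "adjoint B y + adjoint A l = 0"
    "y \<in> normal_cone Tu (A s' + (1/2) *\<^sub>R B u)" "l \<in> normal_cone Tu (A s' + (1/2) *\<^sub>R B u)"
    using multipliers_obtain_normal_multiplier by blast
  then show "y = 0"
    using normal yz by (auto simp: multipliers_def)
next
  fix s y z
  assume multiplier: "\<forall>y z s. multipliers y z \<and> A s + (1/2) *\<^sub>R B u \<in> Tu \<longrightarrow> y = 0"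
    and yz: "adjoint A y = 0 \<and> adjoint B y + adjoint A z = 0
      \<and> y \<in> normal_cone Tu (A s + (1/2) *\<^sub>R B u) \<and> z \<in> normal_cone Tu (A s + (1/2) *\<^sub>R B u)"
  then have w: "A s + (1/2) *\<^sub>R B u \<in> Tu"
    by (auto simp: normal_cone_def split: if_splits)
  have "convex_cone Tu"
    unfolding Tu_eq by (rule convex_cone_polyhedral_cone)
  then have "normal_cone Tu (A s + (1/2) *\<^sub>R B u) \<subseteq> polar Tu"
    using normal_cone_convex_cone[OF _ w] by blast
  then have "normal_cone Tu (A s + (1/2) *\<^sub>R B u) \<subseteq> polar T"
    using polar_Tu_subset by blast
  then show "y = 0"
    using multiplier yz w by (auto simp: multipliers_def)
qed

lemma second_order_tangent_condition_iff:
  "(\<forall>s y z. adjoint A y = 0 \<and> adjoint B y + adjoint A z = 0 \<and> y \<in> normal_cone Tu (A s + (1/2) *\<^sub>R B u)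
      \<and> z \<in> tangent_cone (normal_cone Tu (A s + (1/2) *\<^sub>R B u)) y \<longrightarrow> y = 0)
   \<longleftrightarrow> (\<forall>y z s. multipliers y z \<and> A s + (1/2) *\<^sub>R B u \<in> Tu \<longrightarrow> y = 0)"
proof -
  have "(\<forall>y z. adjoint A y = 0 \<and> adjoint B y + adjoint A z = 0 \<and> y \<in> normal_cone Tu w
      \<and> z \<in> tangent_cone (normal_cone Tu w) y \<longrightarrow> y = 0)
    \<longleftrightarrow> (\<forall>y z. adjoint A y = 0 \<and> adjoint B y + adjoint A z = 0 \<and> y \<in> normal_cone Tu w
      \<and> z \<in> normal_cone Tu w \<longrightarrow> y = 0)" for w
    by (rule multiplier_condition_tangent_cone_iff)
      (simp_all add: adjoint_linear linear_A polyhedron_normal_cone_Tu convex_normal_cone conic_normal_cone)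
  then show ?thesis
    unfolding second_order_normal_cone_condition_iff[symmetric] by blast
qed

end

theorem proposition3p11:
  fixes g :: "'a::euclidean_space \<Rightarrow> real ^ 'm"
    and g' :: "'a \<Rightarrow> ('a \<Rightarrow>\<^sub>L (real ^ 'm))"
    and g'' :: "'a \<Rightarrow> ('a \<Rightarrow>\<^sub>L ('a \<Rightarrow>\<^sub>L (real ^ 'm)))"
    and D :: "(real ^ 'm) set" and xb u :: 'a
  assumes C2: "C2_with g g' g''"
    and polyD: "polyhedron D"
    and gph: "g xb \<in> D"
    and u_sphere: "norm u = 1"
    and u_tan: "blinfun_apply (g' xb) u \<in> tangent_cone D (g xb)"
  shows
   "let A = blinfun_apply (g' xb); As = adjoint A; TD = tangent_cone D (g xb);
        ND = normal_cone D (g xb);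
        C = (\<lambda>y z. As y = 0 \<and> hess_lag g'' xb y u + As z = 0 \<and> y \<in> ND \<and> z \<in> ND);
        N1 = normal_cone TD (A u);
        Tu = tangent_cone TD (A u);
        w = (\<lambda>s. A s + (1/2) *\<^sub>R d2 g'' xb u u)
    in
    (({a + b - c | a b c. a \<in> range A \<and> b \<in> d2 g'' xb u ` {s. A s \<in> TD} \<and> c \<in> TD} = UNIV)
       \<longleftrightarrow> (\<forall>y z. C y z \<longrightarrow> y = 0))
  \<and> ((\<forall>y z. As y = 0 \<and> hess_lag g'' xb y u + As z = 0 \<and> y \<in> N1 \<and> z \<in> N1 \<longrightarrow> y = 0)
       \<longleftrightarrow> (\<forall>y z. C y z \<and> z \<bullet> A u = 0 \<longrightarrow> y = 0))
  \<and> ((\<forall>y z. As y = 0 \<and> hess_lag g'' xb y u + As z = 0 \<and> y \<in> N1 \<and> z \<in> tangent_cone N1 y \<longrightarrow> y = 0)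
       \<longleftrightarrow> (\<forall>y z. C y z \<and> z \<bullet> A u = 0 \<longrightarrow> y = 0))
  \<and> ((\<forall>y z. C y z \<and> is_arg_max (\<lambda>yh. (1/2) * (yh \<bullet> d2 g'' xb u u)) (\<lambda>yh. yh \<in> ND \<and> As yh = 0) y
            \<longrightarrow> y = 0)
       \<longleftrightarrow> (\<forall>y z s. C y z \<and> w s \<in> Tu \<longrightarrow> y = 0))
  \<and> ((\<forall>s y z. As y = 0 \<and> hess_lag g'' xb y u + As z = 0 \<and> y \<in> normal_cone Tu (w s)
              \<and> z \<in> normal_cone Tu (w s) \<longrightarrow> y = 0)
       \<longleftrightarrow> (\<forall>y z s. C y z \<and> w s \<in> Tu \<longrightarrow> y = 0))
  \<and> ((\<forall>s y z. As y = 0 \<and> hess_lag g'' xb y u + As z = 0 \<and> y \<in> normal_cone Tu (w s)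
              \<and> z \<in> tangent_cone (normal_cone Tu (w s)) y \<longrightarrow> y = 0)
       \<longleftrightarrow> (\<forall>y z s. C y z \<and> w s \<in> Tu \<longrightarrow> y = 0))"
proof -
  obtain F :: "(real ^ 'm) set set" and a b
    where F: "finite F" "D = {x. \<forall>i\<in>F. a i \<bullet> x \<le> b i}"
    using polyhedron_obtains_inequalities[OF polyD] .
  define I where "I = {i \<in> F. a i \<bullet> g xb = b i}"
  have "\<forall>i\<in>F. a i \<bullet> g xb \<le> b i"
    using gph by (simp add: F(2))
  from tangent_cone_inequalities[OF F(1) this]
  have TD: "tangent_cone D (g xb) = polyhedral_cone a I"
    by (auto simp: F(2) I_def polyhedral_cone_def)
  have ND: "normal_cone D (g xb) = polar (polyhedral_cone a I)"
    using normal_cone_eq_polar_tangent_cone[OF polyhedron_imp_convex[OF polyD] gph] by (simp add: TD)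
  have d2: "d2 g'' xb u = blinfun_apply (blinfun_apply (g'' xb) u)"
    by (simp add: d2_def fun_eq_iff)
  interpret polyhedral_critical_direction "blinfun_apply (g' xb)" "d2 g'' xb u" a I u
    by (rule polyhedral_critical_direction.intro)
      (use F(1) u_tan in \<open>simp_all add: d2 I_def TD bounded_linear.linear[OF bounded_linear_blinfun_apply]\<close>)
  show ?thesis
    unfolding Let_def TD ND hess_lag_def
    using regularity_iff normal_cone_condition_iff tangent_normal_cone_condition_iff
      arg_max_condition_iff second_order_normal_cone_condition_iff second_order_tangent_condition_iff
    unfolding regularity_cone_def multipliers_def
    by (intro conjI)
qed

end
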